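(* Let $\mathbb{K}$ be a field of characteristic zero, $\mathbb{F}$ an algebraic closure of $\mathbb{K}$, and $\alpha\in\mathbb{F}$ algebraic of degree $n$ over $\mathbb{K}$. Let $\psi(t)\in \mathbb{K}(\alpha)(t)^m$ be a proper parametrization of a rational curve $\mathcal{C}\subseteq\mathbb{F}^m$, and assume that $\mathcal{C}$ is defined over $\mathbb{K}$. Let $\phi=(\phi_0,\ldots,\phi_{n-1})$ be the standard parametrization of the hypercircle $\mathcal{U}$ associated to $\psi$. Let $\sigma$ be a $\mathbb{K}$-automorphism of $\mathbb{F}$, let $\phi^{\sigma}$, $\psi^{\sigma}$ be the conjugate parametrizations, and let $u_{\sigma}(t)=(\phi^{\sigma})^{-1}\circ\phi=\sum_{i=0}^{n-1}\sigma(\alpha)^i\phi_i(t)$ be the conjugation isomorphism induced by $\mathcal{U}$ between the pencils of hyperplanes $\{\sum_{i}\alpha^ix_i=t\}$ and $\{\sum_i\sigma(\alpha)^ix_i=t\}$. Then $u_{\sigma}=(\psi^{\sigma})^{-1}\circ\psi$ (as rational maps), i.e. $\psi(t)=\psi^{\sigma}(u_\sigma(t))$.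
   Context: A parametrization $\psi$ of $\mathcal{C}$ is proper if it is birational onto $\mathcal{C}$. A curve is defined over a subfield $\mathbb{L}$ if it is the zero set of polynomials with coefficients in $\mathbb{L}$. For a $\mathbb{K}$-automorphism $\sigma$ of $\mathbb{F}$ and a rational function $f$ with coefficients in $\mathbb{F}$, $f^{\sigma}$ denotes the function obtained by applying $\sigma$ to the coefficients of $f$ (componentwise for tuples). Hypercircle associated to $\psi=(\psi_1,\dots,\psi_m)$: substitute $t=\sum_{i=0}^{n-1}\alpha^it_i$ with new variables $t_0,\dots,t_{n-1}$ and write $\psi_j(\sum_i\alpha^it_i)=\sum_{i=0}^{n-1}\alpha^i F_{ij}/D$ with $F_{ij},D\in\mathbb{K}[t_0,\dots,t_{n-1}]$; let $\mathcal{Z}\subseteq\mathbb{F}^n$ be the Zariski closure of $\{F_{ij}=0,\ 1\le i\le n-1,\ 1\le j\le m\}\setminus\{D=0\}$. When $\mathcal{C}$ is defined over $\mathbb{K}$, $\mathcal{Z}$ has exactly one irreducible component of dimension $1$, the hypercircle $\mathcal{U}$; it is a rational curve parametrized by the pencil of hyperplanes $\{\sum_{i=0}^{n-1}\alpha^ix_i=t\}$, and the resulting proper parametrization $\phi=(\phi_0,\dots,\phi_{n-1})\in\mathbb{K}(\alpha)(t)^n$, characterized by $\sum_{i=0}^{n-1}\alpha^i\phi_i(t)=t$, is called the standard parametrization of $\mathcal{U}$; the inverse of $\phi^\sigma$ is $(x_0,\dots,x_{n-1})\mapsto\sum_i\sigma(\alpha)^ix_i$. *)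

theory Defs
  imports "HOL-Computational_Algebra.Polynomial"
begin

definition is_subfield :: "'a::field set \<Rightarrow> bool" where
  "is_subfield K \<longleftrightarrow> 0 \<in> K \<and> 1 \<in> K \<and>
     (\<forall>x\<in>K. \<forall>y\<in>K. x + y \<in> K \<and> x - y \<in> K \<and> x * y \<in> K) \<and>
     (\<forall>x\<in>K. inverse x \<in> K)"

definition poly_over :: "'a::field set \<Rightarrow> 'a poly \<Rightarrow> bool" where
  "poly_over K p \<longleftrightarrow> set (coeffs p) \<subseteq> K"

definition is_algebraic_closure_of :: "'a::field set \<Rightarrow> bool" where
  "is_algebraic_closure_of K \<longleftrightarrow> is_subfield K \<and>
     (\<forall>p::'a poly. degree p > 0 \<longrightarrow> (\<exists>x. poly p x = 0)) \<and>
     (\<forall>x::'a. \<exists>p. p \<noteq> 0 \<and> poly_over K p \<and> poly p x = 0)"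

definition alg_degree :: "'a::field set \<Rightarrow> 'a \<Rightarrow> nat \<Rightarrow> bool" where
  "alg_degree K \<alpha> n \<longleftrightarrow>
     (\<exists>p. p \<noteq> 0 \<and> poly_over K p \<and> poly p \<alpha> = 0 \<and> degree p = n) \<and>
     (\<forall>q. q \<noteq> 0 \<and> poly_over K q \<and> poly q \<alpha> = 0 \<longrightarrow> n \<le> degree q)"

definition adjoin :: "'a::field set \<Rightarrow> 'a \<Rightarrow> 'a set" where
  "adjoin K \<alpha> = \<Inter>{L. is_subfield L \<and> K \<subseteq> L \<and> \<alpha> \<in> L}"

definition is_K_automorphism :: "'a::field set \<Rightarrow> ('a \<Rightarrow> 'a) \<Rightarrow> bool" where
  "is_K_automorphism K \<sigma> \<longleftrightarrow> bij \<sigma> \<and>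
     (\<forall>x y. \<sigma> (x + y) = \<sigma> x + \<sigma> y \<and> \<sigma> (x * y) = \<sigma> x * \<sigma> y) \<and>
     (\<forall>c\<in>K. \<sigma> c = c)"

text \<open>Points of F^n are represented as functions nat => 'a vanishing from index n on.\<close>
definition affine :: "nat \<Rightarrow> (nat \<Rightarrow> 'a::zero) set" where
  "affine n = {x. \<forall>i\<ge>n. x i = 0}"

text \<open>Polynomial functions in the variables x_0..x_{n-1} with coefficients in S
  (over the infinite field F these are the same as polynomials).\<close>
inductive_set poly_funs :: "'a::field set \<Rightarrow> nat \<Rightarrow> ((nat \<Rightarrow> 'a) \<Rightarrow> 'a) set"
  for S :: "'a set" and n :: nat where
  pf_const: "c \<in> S \<Longrightarrow> (\<lambda>x. c) \<in> poly_funs S n"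
| pf_var: "i < n \<Longrightarrow> (\<lambda>x. x i) \<in> poly_funs S n"
| pf_add: "f \<in> poly_funs S n \<Longrightarrow> g \<in> poly_funs S n \<Longrightarrow> (\<lambda>x. f x + g x) \<in> poly_funs S n"
| pf_mult: "f \<in> poly_funs S n \<Longrightarrow> g \<in> poly_funs S n \<Longrightarrow> (\<lambda>x. f x * g x) \<in> poly_funs S n"

definition zero_set :: "nat \<Rightarrow> ((nat \<Rightarrow> 'a) \<Rightarrow> 'a) set \<Rightarrow> (nat \<Rightarrow> 'a::field) set" where
  "zero_set n P = {x \<in> affine n. \<forall>f\<in>P. f x = 0}"

definition defined_over :: "'a::field set \<Rightarrow> nat \<Rightarrow> (nat \<Rightarrow> 'a) set \<Rightarrow> bool" where
  "defined_over S n A \<longleftrightarrow> (\<exists>P \<subseteq> poly_funs S n. A = zero_set n P)"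

definition zar_closed :: "nat \<Rightarrow> (nat \<Rightarrow> 'a::field) set \<Rightarrow> bool" where
  "zar_closed n A \<longleftrightarrow> defined_over UNIV n A"

definition zar_closure :: "nat \<Rightarrow> (nat \<Rightarrow> 'a::field) set \<Rightarrow> (nat \<Rightarrow> 'a) set" where
  "zar_closure n A = \<Inter>{B. zar_closed n B \<and> A \<subseteq> B}"

definition zar_irreducible :: "nat \<Rightarrow> (nat \<Rightarrow> 'a::field) set \<Rightarrow> bool" where
  "zar_irreducible n A \<longleftrightarrow> A \<noteq> {} \<and> zar_closed n A \<and>
     (\<forall>B C. zar_closed n B \<longrightarrow> zar_closed n C \<longrightarrow> A \<subseteq> B \<union> C \<longrightarrow> A \<subseteq> B \<or> A \<subseteq> C)"

definition has_irred_chain :: "nat \<Rightarrow> (nat \<Rightarrow> 'a::field) set \<Rightarrow> nat \<Rightarrow> bool" where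
  "has_irred_chain n A k \<longleftrightarrow> (\<exists>Zs :: nat \<Rightarrow> (nat \<Rightarrow> 'a) set.
     (\<forall>i\<le>k. zar_irreducible n (Zs i) \<and> Zs i \<subseteq> A) \<and> (\<forall>i<k. Zs i \<subset> Zs (Suc i)))"

definition zar_dim_eq :: "nat \<Rightarrow> (nat \<Rightarrow> 'a::field) set \<Rightarrow> nat \<Rightarrow> bool" where
  "zar_dim_eq n A d \<longleftrightarrow> has_irred_chain n A d \<and> \<not> has_irred_chain n A (Suc d)"

definition irred_component :: "nat \<Rightarrow> (nat \<Rightarrow> 'a::field) set \<Rightarrow> (nat \<Rightarrow> 'a) set \<Rightarrow> bool" where
  "irred_component n Z U \<longleftrightarrow> zar_irreducible n U \<and> U \<subseteq> Z \<and>
     (\<forall>V. zar_irreducible n V \<longrightarrow> U \<subseteq> V \<longrightarrow> V \<subseteq> Z \<longrightarrow> V = U)"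

text \<open>A rational function in t is represented as (numerator, denominator).\<close>
type_synonym 'a ratfun = "'a poly \<times> 'a poly"

definition rf_over :: "'a::field set \<Rightarrow> 'a ratfun \<Rightarrow> bool" where
  "rf_over L r \<longleftrightarrow> poly_over L (fst r) \<and> poly_over L (snd r) \<and> snd r \<noteq> 0"

definition rf_defined :: "'a::field ratfun \<Rightarrow> 'a \<Rightarrow> bool" where
  "rf_defined r t \<longleftrightarrow> poly (snd r) t \<noteq> 0"

definition rf_eval :: "'a::field ratfun \<Rightarrow> 'a \<Rightarrow> 'a" where
  "rf_eval r t = poly (fst r) t / poly (snd r) t"

definition rf_conj :: "('a \<Rightarrow> 'a) \<Rightarrow> 'a::field ratfun \<Rightarrow> 'a ratfun" where
  "rf_conj \<sigma> r = (map_poly \<sigma> (fst r), map_poly \<sigma> (snd r))"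

definition tup_defined :: "nat \<Rightarrow> (nat \<Rightarrow> 'a::field ratfun) \<Rightarrow> 'a \<Rightarrow> bool" where
  "tup_defined m \<psi> t \<longleftrightarrow> (\<forall>j<m. rf_defined (\<psi> j) t)"

definition tup_eval :: "nat \<Rightarrow> (nat \<Rightarrow> 'a::field ratfun) \<Rightarrow> 'a \<Rightarrow> (nat \<Rightarrow> 'a)" where
  "tup_eval m \<psi> t = (\<lambda>j. if j < m then rf_eval (\<psi> j) t else 0)"

definition tup_conj :: "('a \<Rightarrow> 'a) \<Rightarrow> (nat \<Rightarrow> 'a::field ratfun) \<Rightarrow> (nat \<Rightarrow> 'a ratfun)" where
  "tup_conj \<sigma> \<psi> = (\<lambda>j. rf_conj \<sigma> (\<psi> j))"

definition tup_over :: "'a::field set \<Rightarrow> nat \<Rightarrow> (nat \<Rightarrow> 'a ratfun) \<Rightarrow> bool" where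
  "tup_over L m \<psi> \<longleftrightarrow> (\<forall>j<m. rf_over L (\<psi> j))"

definition param_curve :: "nat \<Rightarrow> (nat \<Rightarrow> 'a::field ratfun) \<Rightarrow> (nat \<Rightarrow> 'a) set" where
  "param_curve m \<psi> = zar_closure m {tup_eval m \<psi> t | t. tup_defined m \<psi> t}"

text \<open>psi is proper (birational onto its image curve): it has a rational inverse
  A/B (A, B polynomials on F^m) defined on the curve, with (A/B) o psi = id.\<close>
definition proper_param :: "nat \<Rightarrow> (nat \<Rightarrow> 'a::field ratfun) \<Rightarrow> bool" where
  "proper_param m \<psi> \<longleftrightarrow> (\<exists>A\<in>poly_funs UNIV m. \<exists>B\<in>poly_funs UNIV m.
     finite {t. \<not> (tup_defined m \<psi> t \<and> B (tup_eval m \<psi> t) \<noteq> 0 \<and>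
                   A (tup_eval m \<psi> t) = t * B (tup_eval m \<psi> t))})"

text \<open>F_ij, D (coefficients in K, in n variables) satisfy
  psi_j(sum_i alpha^i t_i) = sum_i alpha^i F_ij / D  (stated as a polynomial identity).\<close>
definition hc_data :: "'a::field set \<Rightarrow> 'a \<Rightarrow> nat \<Rightarrow> nat \<Rightarrow> (nat \<Rightarrow> 'a ratfun)
    \<Rightarrow> (nat \<Rightarrow> nat \<Rightarrow> (nat \<Rightarrow> 'a) \<Rightarrow> 'a) \<Rightarrow> ((nat \<Rightarrow> 'a) \<Rightarrow> 'a) \<Rightarrow> bool" where
  "hc_data K \<alpha> n m \<psi> F D \<longleftrightarrow>
     D \<in> poly_funs K n \<and> (\<exists>x\<in>affine n. D x \<noteq> 0) \<and>
     (\<forall>i<n. \<forall>j<m. F i j \<in> poly_funs K n) \<and>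
     (\<forall>j<m. \<forall>x\<in>affine n.
        poly (fst (\<psi> j)) (\<Sum>i<n. \<alpha> ^ i * x i) * D x =
        poly (snd (\<psi> j)) (\<Sum>i<n. \<alpha> ^ i * x i) * (\<Sum>i<n. \<alpha> ^ i * F i j x))"

definition hc_Z :: "nat \<Rightarrow> nat \<Rightarrow> (nat \<Rightarrow> nat \<Rightarrow> (nat \<Rightarrow> 'a) \<Rightarrow> 'a) \<Rightarrow> ((nat \<Rightarrow> 'a) \<Rightarrow> 'a)
    \<Rightarrow> (nat \<Rightarrow> 'a::field) set" where
  "hc_Z n m F D = zar_closure n
     ({x \<in> affine n. \<forall>i\<in>{1..<n}. \<forall>j<m. F i j x = 0} - {x. D x = 0})"

definition is_hypercircle :: "nat \<Rightarrow> (nat \<Rightarrow> 'a::field) set \<Rightarrow> (nat \<Rightarrow> 'a) set \<Rightarrow> bool" where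
  "is_hypercircle n Z U \<longleftrightarrow> irred_component n Z U \<and> zar_dim_eq n U 1 \<and>
     (\<forall>V. irred_component n Z V \<and> zar_dim_eq n V 1 \<longrightarrow> V = U)"

definition standard_param :: "'a::field set \<Rightarrow> 'a \<Rightarrow> nat \<Rightarrow> (nat \<Rightarrow> 'a) set
    \<Rightarrow> (nat \<Rightarrow> 'a ratfun) \<Rightarrow> bool" where
  "standard_param K \<alpha> n U \<phi> \<longleftrightarrow> tup_over (adjoin K \<alpha>) n \<phi> \<and>
     U = param_curve n \<phi> \<and> proper_param n \<phi> \<and>
     (\<forall>t. tup_defined n \<phi> t \<longrightarrow> (\<Sum>i<n. \<alpha> ^ i * rf_eval (\<phi> i) t) = t)"

end

theory Submission
  imports Defs
begin

text \<open>
  Write \<open>a(x) = \<Sum> \<alpha>\<^sup>i x\<^sub>i\<close> and \<open>b(x) = \<Sum> \<sigma>(\<alpha>)\<^sup>i x\<^sub>i\<close>. Since \<open>F\<close> and \<open>D\<close> have coefficients in \<open>K\<close>, the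
  set \<open>{F\<^sub>i\<^sub>j = 0, i \<ge> 1} - {D = 0}\<close> is stable under applying \<open>\<sigma>\<close> coordinatewise; this map is a
  homeomorphism for the Zariski topology, so the closure \<open>Z\<close> is stable too, and so is its only
  one-dimensional component \<open>U\<close>. On that open set both \<open>\<psi>\<^sub>j(a(x))\<close> and, after conjugating the
  defining identity, \<open>\<psi>\<^sub>j\<^sup>\<sigma>(b(x))\<close> equal \<open>F\<^sub>0\<^sub>j/D\<close>; the cross-multiplied identity is polynomial,
  hence holds on \<open>Z \<supseteq> U\<close>. At \<open>x = \<phi>(t)\<close> we have \<open>a(x) = t\<close> and \<open>b(x) = u\<^sub>\<sigma>(t)\<close>, which gives
  \<open>\<psi>(t) = \<psi>\<^sup>\<sigma>(u\<^sub>\<sigma>(t))\<close> whenever the denominators do not vanish. Finally \<open>u\<^sub>\<sigma>\<close> takes each value \<open>c\<close>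
  only finitely often: otherwise it is constant, \<open>U\<close> lies in the hyperplane \<open>b(x) = c\<close>, and
  \<open>\<sigma>(U) = U\<close> forces \<open>\<sigma>(t) = b(\<sigma> \<circ> \<phi>(t)) = c\<close> for all \<open>t\<close>.
\<close>

lemma K_automorphismD:
  assumes "is_K_automorphism K \<tau>"
  shows K_automorphism_add: "\<tau> (x + y) = \<tau> x + \<tau> y"
    and K_automorphism_mult: "\<tau> (x * y) = \<tau> x * \<tau> y"
    and K_automorphism_fixes: "c \<in> K \<Longrightarrow> \<tau> c = c"
    and K_automorphism_bij: "bij \<tau>"
  using assms unfolding is_K_automorphism_def by auto

lemma K_automorphism_inv_cancel:
  assumes "is_K_automorphism K \<tau>"
  shows K_automorphism_inv_left: "inv \<tau> (\<tau> x) = x"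
    and K_automorphism_inv_right: "\<tau> (inv \<tau> x) = x"
  using K_automorphism_bij[OF assms] by (auto simp: bij_is_inj bij_is_surj surj_f_inv_f)

lemma K_automorphism_zero:
  fixes \<tau> :: "'a::field \<Rightarrow> 'a"
  assumes "is_K_automorphism K \<tau>"
  shows "\<tau> 0 = 0"
proof -
  have "\<tau> 0 + \<tau> 0 = \<tau> 0 + 0"
    using K_automorphism_add[OF assms, of 0 0] by simp
  then show ?thesis by (rule add_left_imp_eq)
qed

lemma K_automorphism_eq_0_iff:
  fixes \<tau> :: "'a::field \<Rightarrow> 'a"
  assumes "is_K_automorphism K \<tau>"
  shows "\<tau> x = 0 \<longleftrightarrow> x = 0"
  by (metis K_automorphism_inv_left K_automorphism_zero assms)

lemma K_automorphism_one:
  fixes \<tau> :: "'a::field \<Rightarrow> 'a"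
  assumes "is_K_automorphism K \<tau>"
  shows "\<tau> 1 = 1"
proof -
  have "\<tau> 1 * \<tau> 1 = \<tau> 1 * 1"
    using K_automorphism_mult[OF assms, of 1 1] by simp
  moreover have "\<tau> 1 \<noteq> 0"
    using K_automorphism_eq_0_iff[OF assms] by simp
  ultimately show ?thesis by simp
qed

lemma K_automorphism_power:
  fixes \<tau> :: "'a::field \<Rightarrow> 'a"
  assumes "is_K_automorphism K \<tau>"
  shows "\<tau> (x ^ k) = \<tau> x ^ k"
  by (induction k) (simp_all add: K_automorphism_one[OF assms] K_automorphism_mult[OF assms])

lemma K_automorphism_sum:
  fixes \<tau> :: "'a::field \<Rightarrow> 'a"
  assumes "is_K_automorphism K \<tau>"
  shows "\<tau> (sum f A) = (\<Sum>a\<in>A. \<tau> (f a))"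
  by (induction A rule: infinite_finite_induct)
    (simp_all add: K_automorphism_zero[OF assms] K_automorphism_add[OF assms])

lemma K_automorphism_poly:
  fixes \<tau> :: "'a::field \<Rightarrow> 'a"
  assumes "is_K_automorphism K \<tau>"
  shows "\<tau> (poly p z) = poly (map_poly \<tau> p) (\<tau> z)"
  by (induction p)
    (simp_all add: map_poly_pCons K_automorphism_zero[OF assms] K_automorphism_add[OF assms]
      K_automorphism_mult[OF assms])

lemma K_automorphism_map_poly_eq_0_iff:
  fixes \<tau> :: "'a::field \<Rightarrow> 'a"
  assumes "is_K_automorphism K \<tau>"
  shows "map_poly \<tau> p = 0 \<longleftrightarrow> p = 0"
  by (rule map_poly_eq_0_iff) (simp_all add: K_automorphism_zero[OF assms] K_automorphism_eq_0_iff[OF assms])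

lemma K_automorphism_inv:
  fixes \<tau> :: "'a::field \<Rightarrow> 'a"
  assumes "is_K_automorphism K \<tau>"
  shows "is_K_automorphism K (inv \<tau>)"
  unfolding is_K_automorphism_def
  using K_automorphismD[OF assms] K_automorphism_inv_cancel[OF assms]
  by (metis bij_imp_bij_inv)

section \<open>Polynomial functions and the pencil of hyperplanes\<close>

lemma poly_funs_K_automorphism:
  fixes \<tau> :: "'a::field \<Rightarrow> 'a"
  assumes "is_K_automorphism K \<tau>" and "f \<in> poly_funs K n"
  shows "\<tau> (f x) = f (\<tau> \<circ> x)"
  using assms(2)
  by induction (simp_all add: K_automorphism_fixes[OF assms(1)] K_automorphism_add[OF assms(1)]
      K_automorphism_mult[OF assms(1)])

lemma poly_funs_conj_inv:
  fixes \<tau> :: "'a::field \<Rightarrow> 'a"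
  assumes "is_K_automorphism K \<tau>" and "f \<in> poly_funs UNIV n"
  shows "(\<lambda>x. \<tau> (f (inv \<tau> \<circ> x))) \<in> poly_funs UNIV n"
  using assms(2)
  by induction (auto simp: K_automorphism_add[OF assms(1)] K_automorphism_mult[OF assms(1)]
      K_automorphism_inv_right[OF assms(1)] intro: poly_funs.intros)

lemma poly_funs_diff:
  assumes "f \<in> poly_funs UNIV n" and "g \<in> poly_funs UNIV n"
  shows "(\<lambda>x. f x - g x) \<in> poly_funs UNIV n"
  using pf_add[OF assms(1) pf_mult[OF pf_const[of "- 1"] assms(2)]] by simp

lemma poly_funs_poly_comp:
  assumes "f \<in> poly_funs UNIV n"
  shows "(\<lambda>x. poly p (f x)) \<in> poly_funs UNIV n"
  by (induction p) (auto intro!: poly_funs.intros assms)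

lemma poly_funs_sum:
  assumes "\<And>i. i \<in> A \<Longrightarrow> f i \<in> poly_funs S n" and "0 \<in> S"
  shows "(\<lambda>x. \<Sum>i\<in>A. f i x) \<in> poly_funs S n"
  using assms(1)
  by (induction A rule: infinite_finite_induct) (auto intro!: poly_funs.intros assms(2))

definition pencil_form :: "'a::field \<Rightarrow> nat \<Rightarrow> (nat \<Rightarrow> 'a) \<Rightarrow> 'a" where
  "pencil_form c n x = (\<Sum>i<n. c ^ i * x i)"

lemma pencil_form_poly_funs: "pencil_form c n \<in> poly_funs UNIV n"
  unfolding pencil_form_def by (rule poly_funs_sum) (auto intro!: poly_funs.intros)

lemma pencil_form_cong: "(\<And>i. i < n \<Longrightarrow> x i = y i) \<Longrightarrow> pencil_form c n x = pencil_form c n y"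
  unfolding pencil_form_def by simp

lemma pencil_form_eq_first:
  assumes "n \<ge> 1" and "\<forall>i\<in>{1..<n}. x i = 0"
  shows "pencil_form c n x = x 0"
proof -
  have "pencil_form c n x = (\<Sum>i\<in>{0}. c ^ i * x i)"
    unfolding pencil_form_def using assms by (intro sum.mono_neutral_right) auto
  then show ?thesis by simp
qed

lemma pencil_form_tup_eval:
  "pencil_form c n (tup_eval n \<phi> t) = (\<Sum>i<n. c ^ i * rf_eval (\<phi> i) t)"
  unfolding pencil_form_def tup_eval_def by simp

lemma K_automorphism_pencil_form:
  fixes \<tau> :: "'a::field \<Rightarrow> 'a"
  assumes "is_K_automorphism K \<tau>"
  shows "\<tau> (pencil_form c n x) = pencil_form (\<tau> c) n (\<tau> \<circ> x)"
  unfolding pencil_form_def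
  by (simp add: K_automorphism_sum[OF assms] K_automorphism_mult[OF assms]
      K_automorphism_power[OF assms])

section \<open>Zariski homeomorphisms\<close>

lemma zar_closed_zero_set: "P \<subseteq> poly_funs UNIV n \<Longrightarrow> zar_closed n (zero_set n P)"
  unfolding zar_closed_def defined_over_def by blast

lemma zar_closure_least: "zar_closed n B \<Longrightarrow> A \<subseteq> B \<Longrightarrow> zar_closure n A \<subseteq> B"
  unfolding zar_closure_def by blast

lemma zar_closure_upper: "A \<subseteq> zar_closure n A"
  unfolding zar_closure_def by blast

lemma zar_closure_vanishing:
  assumes "f \<in> poly_funs UNIV n" and "A \<subseteq> affine n" and "\<And>x. x \<in> A \<Longrightarrow> f x = 0"
    and "y \<in> zar_closure n A"
  shows "f y = 0"
proof -
  have "zar_closure n A \<subseteq> zero_set n {f}"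
    using assms(1-3) by (intro zar_closure_least zar_closed_zero_set) (auto simp: zero_set_def)
  then show ?thesis using assms(4) by (auto simp: zero_set_def)
qed

definition zar_homeo :: "nat \<Rightarrow> ((nat \<Rightarrow> 'a::field) \<Rightarrow> (nat \<Rightarrow> 'a)) \<Rightarrow> bool" where
  "zar_homeo n h \<longleftrightarrow> bij h \<and> (\<forall>A. zar_closed n (h ` A) \<longleftrightarrow> zar_closed n A)"

lemma zar_homeo_inv_image:
  assumes "zar_homeo n h"
  shows zar_homeo_inv_image_image: "inv h ` h ` A = A"
    and zar_homeo_image_inv_image: "h ` inv h ` A = A"
  using assms unfolding zar_homeo_def
  by (simp_all add: image_comp bij_is_inj bij_is_surj surj_f_inv_f image_ident o_def)

lemma zar_homeo_inv:
  assumes "zar_homeo n h"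
  shows "zar_homeo n (inv h)"
  using assms zar_homeo_image_inv_image[OF assms] unfolding zar_homeo_def
  by (metis bij_imp_bij_inv)

lemma zar_homeo_closed_image_iff:
  "zar_homeo n h \<Longrightarrow> zar_closed n (h ` A) \<longleftrightarrow> zar_closed n A"
  unfolding zar_homeo_def by blast

lemma zar_homeo_image_subset_iff:
  "zar_homeo n h \<Longrightarrow> h ` A \<subseteq> h ` B \<longleftrightarrow> A \<subseteq> B"
  unfolding zar_homeo_def by (simp add: bij_is_inj inj_image_subset_iff)

lemma zar_homeo_image_closure_subset:
  assumes h: "zar_homeo n h"
  shows "h ` zar_closure n A \<subseteq> zar_closure n (h ` A)"
proof -
  have "h ` zar_closure n A \<subseteq> B" if B: "zar_closed n B" "h ` A \<subseteq> B" for B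
  proof -
    have "zar_closed n (inv h ` B)"
      using B(1) zar_homeo_closed_image_iff[OF zar_homeo_inv[OF h]] by blast
    moreover have "A \<subseteq> inv h ` B"
      using B(2) zar_homeo_inv_image_image[OF h] by (metis image_mono)
    ultimately have "zar_closure n A \<subseteq> inv h ` B" by (rule zar_closure_least)
    then show ?thesis using zar_homeo_image_inv_image[OF h] by (metis image_mono)
  qed
  then show ?thesis unfolding zar_closure_def[of n "h ` A"] by blast
qed

lemma zar_homeo_image_closure:
  assumes h: "zar_homeo n h"
  shows "h ` zar_closure n A = zar_closure n (h ` A)"
proof
  have "inv h ` zar_closure n (h ` A) \<subseteq> zar_closure n A"
    using zar_homeo_image_closure_subset[OF zar_homeo_inv[OF h], of "h ` A"]
    by (simp add: zar_homeo_inv_image_image[OF h])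
  then show "zar_closure n (h ` A) \<subseteq> h ` zar_closure n A"
    using zar_homeo_image_inv_image[OF h] by (metis image_mono)
qed (rule zar_homeo_image_closure_subset[OF h])

lemma zar_homeo_irreducible:
  assumes h: "zar_homeo n h" and A: "zar_irreducible n A"
  shows "zar_irreducible n (h ` A)"
  unfolding zar_irreducible_def
proof (intro conjI allI impI)
  show "h ` A \<noteq> {}" "zar_closed n (h ` A)"
    using A zar_homeo_closed_image_iff[OF h] unfolding zar_irreducible_def by auto
  fix B C assume "zar_closed n B" "zar_closed n C" and cover: "h ` A \<subseteq> B \<union> C"
  then have "zar_closed n (inv h ` B)" "zar_closed n (inv h ` C)"
    using zar_homeo_closed_image_iff[OF zar_homeo_inv[OF h]] by blast+
  moreover have "A \<subseteq> inv h ` B \<union> inv h ` C"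
    using cover zar_homeo_inv_image_image[OF h] by (metis image_Un image_mono)
  ultimately have "A \<subseteq> inv h ` B \<or> A \<subseteq> inv h ` C"
    using A unfolding zar_irreducible_def by blast
  then show "h ` A \<subseteq> B \<or> h ` A \<subseteq> C"
    using zar_homeo_image_inv_image[OF h] by (metis image_mono)
qed

lemma zar_homeo_has_irred_chain:
  assumes h: "zar_homeo n h" and "has_irred_chain n A k"
  shows "has_irred_chain n (h ` A) k"
proof -
  obtain Zs where "\<forall>i\<le>k. zar_irreducible n (Zs i) \<and> Zs i \<subseteq> A" "\<forall>i<k. Zs i \<subset> Zs (Suc i)"
    using assms(2) unfolding has_irred_chain_def by blast
  then show ?thesis
    unfolding has_irred_chain_def
    by (intro exI[of _ "\<lambda>i. h ` Zs i"])
      (auto simp: zar_homeo_irreducible[OF h] zar_homeo_image_subset_iff[OF h] psubset_eq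
        inj_image_eq_iff[OF bij_is_inj] h[unfolded zar_homeo_def])
qed

lemma zar_homeo_dim:
  assumes h: "zar_homeo n h" and "zar_dim_eq n A d"
  shows "zar_dim_eq n (h ` A) d"
  using assms(2) zar_homeo_has_irred_chain[OF h]
    zar_homeo_has_irred_chain[OF zar_homeo_inv[OF h], of "h ` A"]
  unfolding zar_dim_eq_def zar_homeo_inv_image_image[OF h] by blast

lemma zar_homeo_irred_component:
  assumes h: "zar_homeo n h" and U: "irred_component n Z U"
  shows "irred_component n (h ` Z) (h ` U)"
  unfolding irred_component_def
proof (intro conjI allI impI)
  show "zar_irreducible n (h ` U)" "h ` U \<subseteq> h ` Z"
    using U zar_homeo_irreducible[OF h] unfolding irred_component_def by auto
  fix V assume V: "zar_irreducible n V" "h ` U \<subseteq> V" "V \<subseteq> h ` Z"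
  have "inv h ` V = U"
    using U zar_homeo_irreducible[OF zar_homeo_inv[OF h] V(1)] V(2,3)
      zar_homeo_image_subset_iff[OF h] zar_homeo_image_inv_image[OF h]
    unfolding irred_component_def by metis
  then show "V = h ` U" using zar_homeo_image_inv_image[OF h] by metis
qed

lemma zar_homeo_fixes_hypercircle:
  assumes "zar_homeo n h" and "h ` Z = Z" and U: "is_hypercircle n Z U"
  shows "h ` U = U"
  using U zar_homeo_irred_component[OF assms(1), of Z U] zar_homeo_dim[OF assms(1), of U 1] assms(2)
  unfolding is_hypercircle_def by metis

lemma K_automorphism_comp_image:
  fixes \<tau> :: "'a::field \<Rightarrow> 'a"
  assumes "is_K_automorphism K \<tau>"
  shows "(\<circ>) \<tau> ` A = {y. inv \<tau> \<circ> y \<in> A}"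
proof -
  have "\<tau> \<circ> (inv \<tau> \<circ> y) = y" "inv \<tau> \<circ> (\<tau> \<circ> x) = x" for x y
    by (auto simp: K_automorphism_inv_cancel[OF assms])
  then show ?thesis by (metis (mono_tags, lifting) image_iff mem_Collect_eq subsetI subset_antisym)
qed

lemma K_automorphism_image_closed:
  fixes \<tau> :: "'a::field \<Rightarrow> 'a"
  assumes \<tau>: "is_K_automorphism K \<tau>" and "zar_closed n A"
  shows "zar_closed n ((\<circ>) \<tau> ` A)"
proof -
  obtain P where P: "P \<subseteq> poly_funs UNIV n" "A = zero_set n P"
    using assms(2) unfolding zar_closed_def defined_over_def by blast
  define P' where "P' = (\<lambda>f x. \<tau> (f (inv \<tau> \<circ> x))) ` P"
  have "inv \<tau> \<circ> y \<in> zero_set n P \<longleftrightarrow> y \<in> zero_set n P'" for y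
    using K_automorphism_eq_0_iff[OF K_automorphism_inv[OF \<tau>]] K_automorphism_eq_0_iff[OF \<tau>]
    unfolding zero_set_def affine_def P'_def by auto
  then have "(\<circ>) \<tau> ` A = zero_set n P'"
    unfolding K_automorphism_comp_image[OF \<tau>] P(2) by blast
  moreover have "P' \<subseteq> poly_funs UNIV n"
    using P(1) poly_funs_conj_inv[OF \<tau>] unfolding P'_def by blast
  ultimately show ?thesis using zar_closed_zero_set by metis
qed

lemma K_automorphism_zar_homeo:
  fixes \<tau> :: "'a::field \<Rightarrow> 'a"
  assumes \<tau>: "is_K_automorphism K \<tau>"
  shows "zar_homeo n ((\<circ>) \<tau>)"
proof -
  have inv_image: "(\<circ>) (inv \<tau>) ` (\<circ>) \<tau> ` A = A" for A :: "(nat \<Rightarrow> 'a) set"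
    by (auto simp: image_comp o_def K_automorphism_inv_left[OF \<tau>])
  have "bij ((\<circ>) \<tau>)"
    by (rule o_bij[of "(\<circ>) (inv \<tau>)"]) (auto simp: o_def K_automorphism_inv_cancel[OF \<tau>])
  moreover have "zar_closed n ((\<circ>) \<tau> ` A) \<longleftrightarrow> zar_closed n A" for A
    using K_automorphism_image_closed[OF \<tau>, of n A]
      K_automorphism_image_closed[OF K_automorphism_inv[OF \<tau>], of n "(\<circ>) \<tau> ` A"]
    by (auto simp: inv_image)
  ultimately show ?thesis unfolding zar_homeo_def by blast
qed

lemma finite_not_tup_defined:
  assumes "\<forall>i<n. snd (\<phi> i) \<noteq> (0::'a::field poly)"
  shows "finite {t. \<not> tup_defined n \<phi> t}"
proof -
  have "{t. \<not> tup_defined n \<phi> t} = (\<Union>i<n. {t. poly (snd (\<phi> i)) t = 0})"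
    unfolding tup_defined_def rf_defined_def by auto
  then show ?thesis using assms poly_roots_finite by auto
qed

lemma rf_lincomb_const_of_infinite:
  fixes \<phi> :: "nat \<Rightarrow> 'a::field ratfun" and w :: "nat \<Rightarrow> 'a"
  assumes "\<forall>i<n. snd (\<phi> i) \<noteq> 0"
    and "infinite {t. tup_defined n \<phi> t \<and> (\<Sum>i<n. w i * rf_eval (\<phi> i) t) = c}"
    and "tup_defined n \<phi> t"
  shows "(\<Sum>i<n. w i * rf_eval (\<phi> i) t) = c"
proof -
  \<comment> \<open>Clearing denominators turns the level set into the root set of a polynomial.\<close>
  define Q where "Q = (\<Prod>i<n. snd (\<phi> i))"
  define P where "P = (\<Sum>i<n. smult (w i) (fst (\<phi> i) * (\<Prod>k\<in>{..<n}-{i}. snd (\<phi> k))))"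
  have cleared: "poly P s = (\<Sum>i<n. w i * rf_eval (\<phi> i) s) * poly Q s" if "tup_defined n \<phi> s" for s
  proof -
    have "poly Q s = poly (snd (\<phi> i)) s * (\<Prod>k\<in>{..<n}-{i}. poly (snd (\<phi> k)) s)" if "i < n" for i
      using that by (simp add: Q_def poly_prod prod.remove)
    moreover have "poly (snd (\<phi> i)) s \<noteq> 0" if "i < n" for i
      using \<open>tup_defined n \<phi> s\<close> that unfolding tup_defined_def rf_defined_def by auto
    ultimately show ?thesis
      by (simp add: P_def poly_sum poly_prod sum_distrib_right rf_eval_def)
  qed
  have "{s. tup_defined n \<phi> s \<and> (\<Sum>i<n. w i * rf_eval (\<phi> i) s) = c} \<subseteq> {s. poly (P - smult c Q) s = 0}"
    using cleared by auto
  then have "P - smult c Q = 0"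
    using assms(2) finite_subset poly_roots_finite by blast
  moreover have "poly Q t \<noteq> 0"
    using assms(3) unfolding Q_def tup_defined_def rf_defined_def by (simp add: poly_prod)
  ultimately show ?thesis
    using cleared[OF assms(3)] by (simp add: right_minus_eq)
qed

lemma cross_eq_of_common_ratio:
  fixes a b c d e f :: "'a::field"
  assumes "a * d = b * f" and "c * d = e * f" and "d \<noteq> 0"
  shows "a * e = c * b"
proof -
  have "(a * e) * d = e * (a * d)" by (simp only: ac_simps)
  also have "\<dots> = b * (e * f)" by (simp only: assms(1) ac_simps)
  also have "\<dots> = b * (c * d)" by (simp only: assms(2))
  also have "\<dots> = (c * b) * d" by (simp only: ac_simps)
  finally show ?thesis using assms(3) by simp
qed

section \<open>The hypercircle and its conjugates\<close>

lemma alg_degree_pos: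
  fixes \<alpha> :: "'a::field"
  assumes "alg_degree K \<alpha> n"
  shows "n \<ge> 1"
proof (rule ccontr)
  obtain p where p: "p \<noteq> 0" "poly p \<alpha> = 0" "degree p = n"
    using assms unfolding alg_degree_def by blast
  assume "\<not> n \<ge> 1"
  then obtain c where "p = [:c:]" using p(3) by (metis degree_eq_zeroE less_one not_less)
  with p(1,2) show False by simp
qed

definition hc_open :: "nat \<Rightarrow> nat \<Rightarrow> (nat \<Rightarrow> nat \<Rightarrow> (nat \<Rightarrow> 'a) \<Rightarrow> 'a) \<Rightarrow> ((nat \<Rightarrow> 'a) \<Rightarrow> 'a)
    \<Rightarrow> (nat \<Rightarrow> 'a::field) set" where
  "hc_open n m F D = {x \<in> affine n. \<forall>i\<in>{1..<n}. \<forall>j<m. F i j x = 0} - {x. D x = 0}"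

lemma hc_Z_eq_closure: "hc_Z n m F D = zar_closure n (hc_open n m F D)"
  unfolding hc_Z_def hc_open_def ..

lemma hc_open_comp_K_automorphism:
  fixes \<tau> :: "'a::field \<Rightarrow> 'a"
  assumes hc: "hc_data K \<alpha> n m \<psi> F D" and \<tau>: "is_K_automorphism K \<tau>"
    and x: "x \<in> hc_open n m F D"
  shows "\<tau> \<circ> x \<in> hc_open n m F D"
proof -
  have D: "D \<in> poly_funs K n" and F: "\<And>i j. i < n \<Longrightarrow> j < m \<Longrightarrow> F i j \<in> poly_funs K n"
    using hc unfolding hc_data_def by auto
  have "D (\<tau> \<circ> x) = \<tau> (D x)" and "\<And>i j. i < n \<Longrightarrow> j < m \<Longrightarrow> F i j (\<tau> \<circ> x) = \<tau> (F i j x)"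
    using poly_funs_K_automorphism[OF \<tau> D] poly_funs_K_automorphism[OF \<tau> F] by simp_all
  then show ?thesis
    using x K_automorphism_zero[OF \<tau>] K_automorphism_eq_0_iff[OF \<tau>]
    unfolding hc_open_def affine_def by auto
qed

lemma hc_open_conj_image:
  fixes \<sigma> :: "'a::field \<Rightarrow> 'a"
  assumes hc: "hc_data K \<alpha> n m \<psi> F D" and \<sigma>: "is_K_automorphism K \<sigma>"
  shows "(\<circ>) \<sigma> ` hc_open n m F D = hc_open n m F D"
proof
  show "(\<circ>) \<sigma> ` hc_open n m F D \<subseteq> hc_open n m F D"
    using hc_open_comp_K_automorphism[OF hc \<sigma>] by blast
  show "hc_open n m F D \<subseteq> (\<circ>) \<sigma> ` hc_open n m F D"
    using hc_open_comp_K_automorphism[OF hc K_automorphism_inv[OF \<sigma>]]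
    unfolding K_automorphism_comp_image[OF \<sigma>] by blast
qed

lemma hypercircle_conj_image:
  fixes \<sigma> :: "'a::field \<Rightarrow> 'a"
  assumes hc: "hc_data K \<alpha> n m \<psi> F D" and U: "is_hypercircle n (hc_Z n m F D) U"
    and \<sigma>: "is_K_automorphism K \<sigma>"
  shows "(\<circ>) \<sigma> ` U = U"
proof (rule zar_homeo_fixes_hypercircle[OF K_automorphism_zar_homeo[OF \<sigma>] _ U])
  show "(\<circ>) \<sigma> ` hc_Z n m F D = hc_Z n m F D"
    unfolding hc_Z_eq_closure zar_homeo_image_closure[OF K_automorphism_zar_homeo[OF \<sigma>]]
      hc_open_conj_image[OF hc \<sigma>] ..
qed

lemma hc_data_conj:
  assumes hc: "hc_data K \<alpha> n m \<psi> F D" and \<sigma>: "is_K_automorphism K \<sigma>"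
  shows "hc_data K (\<sigma> \<alpha>) n m (tup_conj \<sigma> \<psi>) F D"
proof -
  have D: "D \<in> poly_funs K n" and F: "\<And>i j. i < n \<Longrightarrow> j < m \<Longrightarrow> F i j \<in> poly_funs K n"
    and eq: "\<And>j x. j < m \<Longrightarrow> x \<in> affine n \<Longrightarrow>
      poly (fst (\<psi> j)) (pencil_form \<alpha> n x) * D x =
      poly (snd (\<psi> j)) (pencil_form \<alpha> n x) * pencil_form \<alpha> n (\<lambda>i. F i j x)"
    using hc unfolding hc_data_def pencil_form_def by auto
  have "poly (map_poly \<sigma> (fst (\<psi> j))) (pencil_form (\<sigma> \<alpha>) n x) * D x =
        poly (map_poly \<sigma> (snd (\<psi> j))) (pencil_form (\<sigma> \<alpha>) n x) * pencil_form (\<sigma> \<alpha>) n (\<lambda>i. F i j x)"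
    if j: "j < m" and x: "x \<in> affine n" for j x
  proof -
    \<comment> \<open>Apply \<open>\<sigma>\<close> to the defining identity at the point \<open>\<sigma>\<^sup>-\<^sup>1 \<circ> x\<close>; \<open>F\<close> and \<open>D\<close> have coefficients in \<open>K\<close>.\<close>
    define x' where "x' = inv \<sigma> \<circ> x"
    have \<sigma>x': "\<sigma> \<circ> x' = x"
      by (auto simp: x'_def K_automorphism_inv_right[OF \<sigma>])
    have "x' \<in> affine n"
      using x K_automorphism_zero[OF K_automorphism_inv[OF \<sigma>]] unfolding x'_def affine_def by auto
    then have "\<sigma> (poly (fst (\<psi> j)) (pencil_form \<alpha> n x') * D x') =
        \<sigma> (poly (snd (\<psi> j)) (pencil_form \<alpha> n x') * pencil_form \<alpha> n (\<lambda>i. F i j x'))"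
      using eq[OF j] by simp
    moreover have "pencil_form (\<sigma> \<alpha>) n (\<sigma> \<circ> (\<lambda>i. F i j x')) = pencil_form (\<sigma> \<alpha>) n (\<lambda>i. F i j x)"
      using poly_funs_K_automorphism[OF \<sigma> F[OF _ j]] \<sigma>x' by (intro pencil_form_cong) auto
    ultimately show ?thesis
      by (simp add: K_automorphism_mult[OF \<sigma>] K_automorphism_poly[OF \<sigma>]
          K_automorphism_pencil_form[OF \<sigma>] poly_funs_K_automorphism[OF \<sigma> D] \<sigma>x')
  qed
  then show ?thesis
    using hc unfolding hc_data_def tup_conj_def rf_conj_def pencil_form_def by auto
qed

lemma hc_open_ratfun_eq:
  assumes "hc_data K c n m \<psi> F D" and "n \<ge> 1" and "j < m" and "x \<in> hc_open n m F D"
  shows "poly (fst (\<psi> j)) (pencil_form c n x) * D x = poly (snd (\<psi> j)) (pencil_form c n x) * F 0 j x"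
proof -
  have "pencil_form c n (\<lambda>i. F i j x) = F 0 j x"
    using assms(2-4) by (intro pencil_form_eq_first) (auto simp: hc_open_def)
  then show ?thesis
    using assms(1,3,4) unfolding hc_data_def hc_open_def pencil_form_def by auto
qed

lemma hc_Z_cross_identity:
  assumes hc: "hc_data K \<alpha> n m \<psi> F D" and \<sigma>: "is_K_automorphism K \<sigma>"
    and "n \<ge> 1" and j: "j < m" and y: "y \<in> hc_Z n m F D"
  shows "poly (fst (\<psi> j)) (pencil_form \<alpha> n y) * poly (map_poly \<sigma> (snd (\<psi> j))) (pencil_form (\<sigma> \<alpha>) n y) =
         poly (map_poly \<sigma> (fst (\<psi> j))) (pencil_form (\<sigma> \<alpha>) n y) * poly (snd (\<psi> j)) (pencil_form \<alpha> n y)"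
proof -
  define G where "G x =
    poly (fst (\<psi> j)) (pencil_form \<alpha> n x) * poly (map_poly \<sigma> (snd (\<psi> j))) (pencil_form (\<sigma> \<alpha>) n x) -
    poly (map_poly \<sigma> (fst (\<psi> j))) (pencil_form (\<sigma> \<alpha>) n x) * poly (snd (\<psi> j)) (pencil_form \<alpha> n x)"
    for x
  \<comment> \<open>On the open part both \<open>\<psi>\<^sub>j\<close> and its conjugate equal \<open>F\<^sub>0\<^sub>j / D\<close>.\<close>
  have G_open: "G x = 0" if x: "x \<in> hc_open n m F D" for x
  proof -
    have "D x \<noteq> 0" using x by (simp add: hc_open_def)
    with hc_open_ratfun_eq[OF hc \<open>n \<ge> 1\<close> j x]
      hc_open_ratfun_eq[OF hc_data_conj[OF hc \<sigma>] \<open>n \<ge> 1\<close> j x]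
    show ?thesis
      unfolding G_def tup_conj_def rf_conj_def fst_conv snd_conv
      using cross_eq_of_common_ratio by simp
  qed
  have G_poly: "G \<in> poly_funs UNIV n"
    unfolding G_def[abs_def]
    by (rule poly_funs_diff; rule pf_mult; rule poly_funs_poly_comp; rule pencil_form_poly_funs)
  have "hc_open n m F D \<subseteq> affine n" by (auto simp: hc_open_def)
  from zar_closure_vanishing[OF G_poly this G_open] have "G y = 0"
    using y by (simp add: hc_Z_eq_closure)
  then show ?thesis by (simp add: G_def)
qed

lemma standard_param_point:
  assumes "standard_param K \<alpha> n U \<phi>" and "tup_defined n \<phi> t"
  shows standard_param_in_curve: "tup_eval n \<phi> t \<in> U"
    and standard_param_pencil: "pencil_form \<alpha> n (tup_eval n \<phi> t) = t"
proof -
  have "tup_eval n \<phi> t \<in> {tup_eval n \<phi> s |s. tup_defined n \<phi> s}"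
    using assms(2) by blast
  then have "tup_eval n \<phi> t \<in> param_curve n \<phi>"
    unfolding param_curve_def by (rule subsetD[OF zar_closure_upper])
  then show "tup_eval n \<phi> t \<in> U"
    using assms(1) unfolding standard_param_def by simp
  show "pencil_form \<alpha> n (tup_eval n \<phi> t) = t"
    using assms unfolding standard_param_def by (simp add: pencil_form_tup_eval)
qed

lemma standard_param_conj_fibre_finite:
  fixes \<sigma> :: "'a::field \<Rightarrow> 'a"
  assumes \<phi>: "standard_param K \<alpha> n U \<phi>" and \<sigma>: "is_K_automorphism K \<sigma>"
    and U: "(\<circ>) \<sigma> ` U = U"
  shows "finite {t. tup_defined n \<phi> t \<and> pencil_form (\<sigma> \<alpha>) n (tup_eval n \<phi> t) = c}"
proof (rule ccontr)
  assume inf: "infinite {t. tup_defined n \<phi> t \<and> pencil_form (\<sigma> \<alpha>) n (tup_eval n \<phi> t) = c}"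
  have "\<forall>i<n. snd (\<phi> i) \<noteq> 0"
    using \<phi> unfolding standard_param_def tup_over_def rf_over_def by simp
  from rf_lincomb_const_of_infinite[OF this inf[unfolded pencil_form_tup_eval]]
  have const: "pencil_form (\<sigma> \<alpha>) n (tup_eval n \<phi> t) = c" if "tup_defined n \<phi> t" for t
    using that unfolding pencil_form_tup_eval .
  have "U \<subseteq> zero_set n {\<lambda>x. pencil_form (\<sigma> \<alpha>) n x - c}"
  proof -
    have "{tup_eval n \<phi> t |t. tup_defined n \<phi> t} \<subseteq> zero_set n {\<lambda>x. pencil_form (\<sigma> \<alpha>) n x - c}"
      using const unfolding zero_set_def tup_eval_def affine_def by auto
    moreover have "zar_closed n (zero_set n {\<lambda>x. pencil_form (\<sigma> \<alpha>) n x - c})"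
      by (intro zar_closed_zero_set)
        (simp add: poly_funs_diff pencil_form_poly_funs pf_const[of c UNIV n])
    ultimately show ?thesis
      using \<phi> unfolding standard_param_def param_curve_def by (simp add: zar_closure_least)
  qed
  moreover have "\<sigma> \<circ> tup_eval n \<phi> t \<in> U" if "tup_defined n \<phi> t" for t
    using imageI[OF standard_param_in_curve[OF \<phi> that], of "(\<circ>) \<sigma>"] unfolding U .
  ultimately have "pencil_form (\<sigma> \<alpha>) n (\<sigma> \<circ> tup_eval n \<phi> t) = c" if "tup_defined n \<phi> t" for t
    using that unfolding zero_set_def by fastforce
  then have "\<sigma> t = c" if "tup_defined n \<phi> t" for t
    using that K_automorphism_pencil_form[OF \<sigma>] standard_param_pencil[OF \<phi> that] by metis
  then have "t = inv \<sigma> c" if "tup_defined n \<phi> t" for t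
    using that K_automorphism_inv_left[OF \<sigma>, of t] by simp
  then have "{t. tup_defined n \<phi> t \<and> pencil_form (\<sigma> \<alpha>) n (tup_eval n \<phi> t) = c} \<subseteq> {inv \<sigma> c}"
    by blast
  with inf show False using finite_subset by blast
qed

lemma standard_param_conj_undefined_finite:
  fixes \<sigma> :: "'a::field \<Rightarrow> 'a"
  assumes \<phi>: "standard_param K \<alpha> n U \<phi>" and \<sigma>: "is_K_automorphism K \<sigma>"
    and U: "(\<circ>) \<sigma> ` U = U" and \<psi>: "\<forall>j<m. snd (\<psi> j) \<noteq> 0"
  shows "finite {t. tup_defined n \<phi> t \<and>
    \<not> tup_defined m (tup_conj \<sigma> \<psi>) (pencil_form (\<sigma> \<alpha>) n (tup_eval n \<phi> t))}"
proof (rule finite_subset)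
  show "{t. tup_defined n \<phi> t \<and> \<not> tup_defined m (tup_conj \<sigma> \<psi>) (pencil_form (\<sigma> \<alpha>) n (tup_eval n \<phi> t))}
      \<subseteq> (\<Union>j<m. \<Union>r\<in>{r. poly (map_poly \<sigma> (snd (\<psi> j))) r = 0}.
            {t. tup_defined n \<phi> t \<and> pencil_form (\<sigma> \<alpha>) n (tup_eval n \<phi> t) = r})"
    unfolding tup_defined_def rf_defined_def tup_conj_def rf_conj_def by auto
  have "finite {r. poly (map_poly \<sigma> (snd (\<psi> j))) r = 0}" if "j < m" for j
    using \<psi> that K_automorphism_map_poly_eq_0_iff[OF \<sigma>] poly_roots_finite by blast
  then show "finite (\<Union>j<m. \<Union>r\<in>{r. poly (map_poly \<sigma> (snd (\<psi> j))) r = 0}.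
      {t. tup_defined n \<phi> t \<and> pencil_form (\<sigma> \<alpha>) n (tup_eval n \<phi> t) = r})"
    using standard_param_conj_fibre_finite[OF \<phi> \<sigma> U] by blast
qed

lemma hypercircle_conj_param_eq:
  fixes \<sigma> :: "'a::field \<Rightarrow> 'a"
  assumes hc: "hc_data K \<alpha> n m \<psi> F D" and U: "is_hypercircle n (hc_Z n m F D) U"
    and \<phi>: "standard_param K \<alpha> n U \<phi>" and \<sigma>: "is_K_automorphism K \<sigma>" and "n \<ge> 1"
    and t: "tup_defined n \<phi> t" "tup_defined m \<psi> t"
    and u: "tup_defined m (tup_conj \<sigma> \<psi>) (pencil_form (\<sigma> \<alpha>) n (tup_eval n \<phi> t))"
  shows "tup_eval m \<psi> t = tup_eval m (tup_conj \<sigma> \<psi>) (pencil_form (\<sigma> \<alpha>) n (tup_eval n \<phi> t))"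
proof
  fix j
  define y where "y = tup_eval n \<phi> t"
  have "y \<in> hc_Z n m F D"
    using standard_param_in_curve[OF \<phi> t(1)] U
    unfolding y_def is_hypercircle_def irred_component_def by blast
  show "tup_eval m \<psi> t j = tup_eval m (tup_conj \<sigma> \<psi>) (pencil_form (\<sigma> \<alpha>) n y) j"
  proof (cases "j < m")
    case True
    then have "poly (fst (\<psi> j)) t * poly (map_poly \<sigma> (snd (\<psi> j))) (pencil_form (\<sigma> \<alpha>) n y) =
        poly (map_poly \<sigma> (fst (\<psi> j))) (pencil_form (\<sigma> \<alpha>) n y) * poly (snd (\<psi> j)) t"
      using hc_Z_cross_identity[OF hc \<sigma> \<open>n \<ge> 1\<close> True \<open>y \<in> hc_Z n m F D\<close>]
        standard_param_pencil[OF \<phi> t(1)]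
      unfolding y_def by simp
    moreover have "poly (snd (\<psi> j)) t \<noteq> 0"
      and "poly (map_poly \<sigma> (snd (\<psi> j))) (pencil_form (\<sigma> \<alpha>) n y) \<noteq> 0"
      using t(2) u True unfolding y_def tup_defined_def rf_defined_def tup_conj_def rf_conj_def by auto
    ultimately show ?thesis
      using True unfolding tup_eval_def tup_conj_def rf_conj_def rf_eval_def by (simp add: frac_eq_eq)
  qed (simp add: tup_eval_def)
qed

theorem theorem1:
  fixes K :: "'a::field_char_0 set" and \<alpha> :: 'a and n m :: nat
    and \<psi> \<phi> :: "nat \<Rightarrow> 'a ratfun"
    and F :: "nat \<Rightarrow> nat \<Rightarrow> (nat \<Rightarrow> 'a) \<Rightarrow> 'a" and D :: "(nat \<Rightarrow> 'a) \<Rightarrow> 'a"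
    and U :: "(nat \<Rightarrow> 'a) set" and \<sigma> :: "'a \<Rightarrow> 'a"
  assumes "is_algebraic_closure_of K"
    and "alg_degree K \<alpha> n"
    and "tup_over (adjoin K \<alpha>) m \<psi>"
    and "proper_param m \<psi>"
    and "defined_over K m (param_curve m \<psi>)"
    and "hc_data K \<alpha> n m \<psi> F D"
    and "is_hypercircle n (hc_Z n m F D) U"
    and "standard_param K \<alpha> n U \<phi>"
    and "is_K_automorphism K \<sigma>"
  shows "finite {t. \<not> (let u = (\<Sum>i<n. \<sigma> \<alpha> ^ i * rf_eval (\<phi> i) t) in
            tup_defined n \<phi> t \<and> tup_defined m \<psi> t \<and>
            tup_defined m (tup_conj \<sigma> \<psi>) u \<and>
            tup_eval m \<psi> t = tup_eval m (tup_conj \<sigma> \<psi>) u)}"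
proof (rule finite_subset)
  have \<psi>: "\<forall>j<m. snd (\<psi> j) \<noteq> 0" and \<phi>: "\<forall>i<n. snd (\<phi> i) \<noteq> 0"
    using assms(3,8) unfolding standard_param_def tup_over_def rf_over_def by simp_all
  have U: "(\<circ>) \<sigma> ` U = U"
    by (rule hypercircle_conj_image[OF assms(6,7,9)])
  show "finite ({t. \<not> tup_defined n \<phi> t} \<union> {t. \<not> tup_defined m \<psi> t} \<union>
      {t. tup_defined n \<phi> t \<and> \<not> tup_defined m (tup_conj \<sigma> \<psi>) (pencil_form (\<sigma> \<alpha>) n (tup_eval n \<phi> t))})"
    using finite_not_tup_defined[OF \<phi>] finite_not_tup_defined[OF \<psi>]
      standard_param_conj_undefined_finite[OF assms(8,9) U \<psi>] by blast
  show "{t. \<not> (let u = (\<Sum>i<n. \<sigma> \<alpha> ^ i * rf_eval (\<phi> i) t) in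
            tup_defined n \<phi> t \<and> tup_defined m \<psi> t \<and>
            tup_defined m (tup_conj \<sigma> \<psi>) u \<and>
            tup_eval m \<psi> t = tup_eval m (tup_conj \<sigma> \<psi>) u)} \<subseteq> \<dots>"
    using hypercircle_conj_param_eq[OF assms(6,7,8,9) alg_degree_pos[OF assms(2)]]
    by (auto simp: pencil_form_tup_eval)
qed

end
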